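(* Let $A\in\mathbb{R}_{\max}^{n\times n}$ with $\lambda(A)=0$, let $g=g(\mathrm{crit}(A))$, assume $T_1(A)=\mathrm{DM}(g,n)$ and that $\mathrm{crit}(A)$ contains, up to choice of first node, a unique cycle $Z_0$ of length $g$. Let $i$ be a node of $Z_0$ and $j$ a node not in $Z_0$. Then in any interesting walk there is exactly one occurrence of $i$ between any two consecutive occurrences of $j$, and there is no occurrence of $i$ before the first occurrence of $j$ nor after the last occurrence of $j$.
   Context: Max-plus semiring $\mathbb{R}_{\max}=\mathbb{R}\cup\{-\infty\}$ with $a\oplus b=\max(a,b)$, $a\otimes b=a+b$; $(AB)_{ij}=\max_k(a_{ik}+b_{kj})$; $A^t$ is the $t$-th max-plus power, $A^0=I$. $\mathcal{D}(A)$ is the digraph on $\{1,\dots,n\}$ with arc $(i,j)$ of weight $a_{ij}$ whenever $a_{ij}\ne-\infty$. A walk is a node sequence whose consecutive pairs are arcs, its length is its number of arcs and its weight the sum of its arc weights; cycles are closed walks with no proper closed subwalk. $\lambda(A)$ is the maximal cycle mean. $\mathrm{crit}(A)$ is the subgraph of all nodes and arcs of cycles attaining $\lambda(A)$; its nodes are critical. $g(\mathrm{crit}(A))$ is the maximum over strongly connected components of $\mathrm{crit}(A)$ of their minimal cycle length. The cyclicity of $\mathrm{crit}(A)$ is the lcm over components of the gcd of their cycle lengths. CSR terms: with $\gamma$ the cyclicity of $\mathrm{crit}(A)$ and $\lambda(A)=0$, $M=I\oplus N\oplus\dots\oplus N^{n-1}$ where $N=A^\gamma$: $c_{ij}=m_{ij}$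 if $j$ critical, else $-\infty$; $r_{ij}=m_{ij}$ if $i$ critical, else $-\infty$; $s_{ij}=a_{ij}$ if $(i,j)$ is an arc of $\mathrm{crit}(A)$, else $-\infty$; $CS^tR[A]$ is the product $CS^tR$. $B_N$ has $(B_N)_{ij}=-\infty$ if $i$ or $j$ is critical and $a_{ij}$ otherwise. $T_1(A)$ is the least $T\ge0$ with $A^t=CS^tR[A]\oplus B_N^t$ for all $t\ge T$. $\mathrm{DM}(g,n)=g(n-2)+n$. Twice optimal / interesting walks: a walk $W$ from $i$ to $j$ passing through at least one node of $Z_0$ is twice optimal if it has maximal weight among all walks from $i$ to $j$ passing through a node of $Z_0$ whose length is congruent to the length of $W$ modulo $g$, and has minimal length among all such walks of maximal weight. It is interesting if it is twice optimal and has length $\mathrm{DM}(g,n)+g-1$. *)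

theory Defs
  imports "HOL-Library.Extended_Real"
begin

text \<open>Max-plus matrices of size n: functions nat => nat => ereal, relevant on
indices {0..<n}; entries are in R_max = R union {-infinity} (never +infinity).
Nodes of the digraph D(A) are 0..n-1.\<close>

type_synonym mpmat = "nat \<Rightarrow> nat \<Rightarrow> ereal"

definition mp_mult :: "nat \<Rightarrow> mpmat \<Rightarrow> mpmat \<Rightarrow> mpmat" where
  "mp_mult n A B = (\<lambda>i j. SUP k\<in>{..<n}. A i k + B k j)"

definition mp_id :: mpmat where
  "mp_id = (\<lambda>i j. if i = j then 0 else -\<infinity>)"

fun mp_pow :: "nat \<Rightarrow> mpmat \<Rightarrow> nat \<Rightarrow> mpmat" where
  "mp_pow n A 0 = mp_id"
| "mp_pow n A (Suc t) = mp_mult n A (mp_pow n A t)"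

definition mp_plus :: "mpmat \<Rightarrow> mpmat \<Rightarrow> mpmat" where
  "mp_plus A B = (\<lambda>i j. max (A i j) (B i j))"

definition is_arc :: "nat \<Rightarrow> mpmat \<Rightarrow> nat \<Rightarrow> nat \<Rightarrow> bool" where
  "is_arc n A i j \<longleftrightarrow> i < n \<and> j < n \<and> A i j \<noteq> -\<infinity>"

definition is_walk :: "nat \<Rightarrow> mpmat \<Rightarrow> nat list \<Rightarrow> bool" where
  "is_walk n A W \<longleftrightarrow> W \<noteq> [] \<and> (\<forall>k\<in>set W. k < n) \<and>
     (\<forall>k. Suc k < length W \<longrightarrow> is_arc n A (W ! k) (W ! Suc k))"

definition wlen :: "nat list \<Rightarrow> nat" where
  "wlen W = length W - 1"

definition wweight :: "mpmat \<Rightarrow> nat list \<Rightarrow> ereal" where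
  "wweight A W = (\<Sum>k<wlen W. A (W ! k) (W ! Suc k))"

definition is_cycle :: "nat \<Rightarrow> mpmat \<Rightarrow> nat list \<Rightarrow> bool" where
  "is_cycle n A Z \<longleftrightarrow> is_walk n A Z \<and> length Z \<ge> 2 \<and> hd Z = last Z \<and> distinct (tl Z)"

definition mcm :: "nat \<Rightarrow> mpmat \<Rightarrow> ereal" where
  "mcm n A = (SUP Z\<in>{Z. is_cycle n A Z}. wweight A Z / ereal (real (wlen Z)))"

definition is_crit_cycle_of_A :: "nat \<Rightarrow> mpmat \<Rightarrow> nat list \<Rightarrow> bool" where
  "is_crit_cycle_of_A n A Z \<longleftrightarrow> is_cycle n A Z \<and> wweight A Z / ereal (real (wlen Z)) = mcm n A"

definition crit_arc :: "nat \<Rightarrow> mpmat \<Rightarrow> nat \<Rightarrow> nat \<Rightarrow> bool" where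
  "crit_arc n A i j \<longleftrightarrow> (\<exists>Z. is_crit_cycle_of_A n A Z \<and>
      (\<exists>k. Suc k < length Z \<and> Z ! k = i \<and> Z ! Suc k = j))"

definition crit_node :: "nat \<Rightarrow> mpmat \<Rightarrow> nat \<Rightarrow> bool" where
  "crit_node n A i \<longleftrightarrow> (\<exists>Z. is_crit_cycle_of_A n A Z \<and> i \<in> set Z)"

definition crit_cycle :: "nat \<Rightarrow> mpmat \<Rightarrow> nat list \<Rightarrow> bool" where
  "crit_cycle n A Z \<longleftrightarrow> is_cycle n A Z \<and>
      (\<forall>k. Suc k < length Z \<longrightarrow> crit_arc n A (Z ! k) (Z ! Suc k))"

definition crit_reach :: "nat \<Rightarrow> mpmat \<Rightarrow> nat \<Rightarrow> nat \<Rightarrow> bool" where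
  "crit_reach n A = (\<lambda>i j. (i, j) \<in> {(a, b). crit_arc n A a b}\<^sup>*)"

definition crit_comp :: "nat \<Rightarrow> mpmat \<Rightarrow> nat \<Rightarrow> nat set" where
  "crit_comp n A k = {l. crit_reach n A k l \<and> crit_reach n A l k}"

definition crit_girth :: "nat \<Rightarrow> mpmat \<Rightarrow> nat" where
  "crit_girth n A = Max {Min {wlen Z | Z. crit_cycle n A Z \<and> set Z \<subseteq> crit_comp n A k} | k. crit_node n A k}"

definition crit_cyclicity :: "nat \<Rightarrow> mpmat \<Rightarrow> nat" where
  "crit_cyclicity n A = Lcm {Gcd {wlen Z | Z. crit_cycle n A Z \<and> set Z \<subseteq> crit_comp n A k} | k. crit_node n A k}"

definition csr_N :: "nat \<Rightarrow> mpmat \<Rightarrow> mpmat" where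
  "csr_N n A = mp_pow n A (crit_cyclicity n A)"

definition csr_M :: "nat \<Rightarrow> mpmat \<Rightarrow> mpmat" where
  "csr_M n A = (\<lambda>i j. SUP t\<in>{..<n}. mp_pow n (csr_N n A) t i j)"

definition csr_C :: "nat \<Rightarrow> mpmat \<Rightarrow> mpmat" where
  "csr_C n A = (\<lambda>i j. if crit_node n A j then csr_M n A i j else -\<infinity>)"

definition csr_R :: "nat \<Rightarrow> mpmat \<Rightarrow> mpmat" where
  "csr_R n A = (\<lambda>i j. if crit_node n A i then csr_M n A i j else -\<infinity>)"

definition csr_S :: "nat \<Rightarrow> mpmat \<Rightarrow> mpmat" where
  "csr_S n A = (\<lambda>i j. if crit_arc n A i j then A i j else -\<infinity>)"

definition CSR :: "nat \<Rightarrow> mpmat \<Rightarrow> nat \<Rightarrow> mpmat" where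
  "CSR n A t = mp_mult n (mp_mult n (csr_C n A) (mp_pow n (csr_S n A) t)) (csr_R n A)"

definition B_N :: "nat \<Rightarrow> mpmat \<Rightarrow> mpmat" where
  "B_N n A = (\<lambda>i j. if crit_node n A i \<or> crit_node n A j then -\<infinity> else A i j)"

definition csr_holds_from :: "nat \<Rightarrow> mpmat \<Rightarrow> nat \<Rightarrow> bool" where
  "csr_holds_from n A T \<longleftrightarrow> (\<forall>t\<ge>T. \<forall>i<n. \<forall>j<n.
      mp_pow n A t i j = mp_plus (CSR n A t) (mp_pow n (B_N n A) t) i j)"

definition T1 :: "nat \<Rightarrow> mpmat \<Rightarrow> nat" where
  "T1 n A = (LEAST T. csr_holds_from n A T)"

definition DM :: "nat \<Rightarrow> nat \<Rightarrow> nat" where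
  "DM g n = g * (n - 2) + n"

definition through :: "nat list \<Rightarrow> nat list \<Rightarrow> bool" where
  "through Z0 W \<longleftrightarrow> set W \<inter> set Z0 \<noteq> {}"

definition twice_optimal :: "nat \<Rightarrow> mpmat \<Rightarrow> nat \<Rightarrow> nat list \<Rightarrow> nat list \<Rightarrow> bool" where
  "twice_optimal n A g Z0 W \<longleftrightarrow> is_walk n A W \<and> through Z0 W \<and>
     (\<forall>V. is_walk n A V \<and> hd V = hd W \<and> last V = last W \<and> through Z0 V \<and>
          wlen V mod g = wlen W mod g \<longrightarrow>
          wweight A V \<le> wweight A W \<and>
          (wweight A V = wweight A W \<longrightarrow> wlen W \<le> wlen V))"

definition interesting :: "nat \<Rightarrow> mpmat \<Rightarrow> nat \<Rightarrow> nat list \<Rightarrow> nat list \<Rightarrow> bool" where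
  "interesting n A g Z0 W \<longleftrightarrow> twice_optimal n A g Z0 W \<and> wlen W = DM g n + g - 1"

end

theory Submission
  imports Defs
begin

text \<open>Let W be twice optimal. Cutting out of W disjoint closed subwalks whose total length is a
  positive multiple of g, while keeping some visit of Z0, yields a walk through Z0 with the same
  end nodes, the same length modulo g and, since closed walks have nonpositive weight when
  lambda(A) = 0, at least the same weight, but shorter length: impossible. A pigeonhole argument on
  positions modulo g then shows that W visits each node of Z0 at most g times and any other node
  at most g + 1 times. An interesting walk has DM(g, n) + g = g * g + (n - g) * (g + 1) positions, so
  all these bounds are attained. With j visited g + 1 times, every visit of i is preceded and followed
  by a visit of j, and two visits of i are separated by one; as i is visited g times, each of the
  g gaps between consecutive visits of j contains exactly one visit of i.\<close>

lemma not_is_walk_Nil [simp]: "\<not> is_walk n A []"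
  unfolding is_walk_def by simp

lemma is_walk_singleton [simp]: "is_walk n A [a] \<longleftrightarrow> a < n"
  unfolding is_walk_def by simp

lemma is_walk_Cons_Cons [simp]:
  "is_walk n A (a # b # W) \<longleftrightarrow> is_arc n A a b \<and> is_walk n A (b # W)"
proof
  assume w: "is_walk n A (a # b # W)"
  have "is_arc n A ((a # b # W) ! 0) ((a # b # W) ! Suc 0)"
    using w unfolding is_walk_def by (metis length_Cons zero_less_Suc Suc_less_eq)
  moreover have "is_arc n A ((b # W) ! k) ((b # W) ! Suc k)" if "Suc k < length (b # W)" for k
    using w that unfolding is_walk_def by (metis Suc_less_eq length_Cons nth_Cons_Suc)
  ultimately show "is_arc n A a b \<and> is_walk n A (b # W)"
    using w unfolding is_walk_def by auto
next
  assume "is_arc n A a b \<and> is_walk n A (b # W)"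
  then show "is_walk n A (a # b # W)"
    unfolding is_walk_def is_arc_def by (auto simp: nth_Cons split: nat.split)
qed

lemma wweight_singleton [simp]: "wweight A [a] = 0"
  by (simp add: wweight_def wlen_def)

lemma wweight_Cons_Cons [simp]: "wweight A (a # b # W) = A a b + wweight A (b # W)"
  unfolding wweight_def wlen_def
  by (simp only: length_Cons diff_Suc_1 sum.lessThan_Suc_shift) simp

lemma is_walk_append:
  assumes "is_walk n A U" "is_walk n A V" "last U = hd V"
  shows "is_walk n A (U @ tl V)"
  using assms
proof (induction U rule: induct_list012)
  case (2 a)
  then show ?case by (cases V) auto
next
  case (3 a b U)
  then show ?case by simp
qed simp

lemma wweight_append:
  assumes "U \<noteq> []" "V \<noteq> []" "last U = hd V"
  shows "wweight A (U @ tl V) = wweight A U + wweight A V"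
  using assms
proof (induction U rule: induct_list012)
  case (2 a)
  then show ?case by (cases V) auto
next
  case (3 a b U)
  then show ?case by (simp add: add.assoc)
qed simp

lemma last_append_tl: "last U = hd V \<Longrightarrow> V \<noteq> [] \<Longrightarrow> last (U @ tl V) = last V"
  by (cases V) auto

lemma is_walk_take:
  "is_walk n A W \<Longrightarrow> k < length W \<Longrightarrow> is_walk n A (take (Suc k) W)"
  unfolding is_walk_def by (auto dest: in_set_takeD)

lemma is_walk_drop:
  "is_walk n A W \<Longrightarrow> k < length W \<Longrightarrow> is_walk n A (drop k W)"
  unfolding is_walk_def by (auto dest: in_set_dropD simp: add.commute[of k])

definition subwalk :: "nat list \<Rightarrow> nat \<Rightarrow> nat \<Rightarrow> nat list" where
  "subwalk W p q = drop p (take (Suc q) W)"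

definition cut_loop :: "nat list \<Rightarrow> nat \<Rightarrow> nat \<Rightarrow> nat list" where
  "cut_loop W p q = take (Suc p) W @ drop (Suc q) W"

context
  fixes W :: "nat list" and p q :: nat
  assumes pq: "p \<le> q" "q < length W"
begin

lemma length_subwalk: "length (subwalk W p q) = Suc (q - p)"
  using pq by (simp add: subwalk_def)

lemma hd_subwalk: "hd (subwalk W p q) = W ! p"
  using pq by (simp add: subwalk_def hd_drop_conv_nth)

lemma last_subwalk: "last (subwalk W p q) = W ! q"
  using pq by (simp add: subwalk_def take_Suc_conv_app_nth)

lemma is_walk_subwalk: "is_walk n A W \<Longrightarrow> is_walk n A (subwalk W p q)"
  using pq unfolding subwalk_def by (intro is_walk_drop is_walk_take) auto

lemma take_append_subwalk: "take (Suc p) W @ tl (subwalk W p q) = take (Suc q) W"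
proof -
  have "take (Suc p) W = take (Suc p) (take (Suc q) W)"
    using pq by simp
  then show ?thesis
    unfolding subwalk_def tl_drop drop_Suc[symmetric] by (metis append_take_drop_id)
qed

lemma length_cut_loop: "length (cut_loop W p q) + (q - p) = length W"
  using pq by (simp add: cut_loop_def)

lemma nth_cut_loop_low: "k \<le> p \<Longrightarrow> cut_loop W p q ! k = W ! k"
  using pq by (simp add: cut_loop_def nth_append)

lemma nth_cut_loop_high:
  "p < k \<Longrightarrow> k < length (cut_loop W p q) \<Longrightarrow> cut_loop W p q ! k = W ! (k + (q - p))"
  using pq by (auto simp: cut_loop_def nth_append intro!: arg_cong[where f = "(!) W"])

lemma hd_cut_loop: "hd (cut_loop W p q) = hd W"
  using pq by (cases W) (auto simp: cut_loop_def)

context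
  assumes closed: "W ! p = W ! q"
begin

lemma cut_loop_eq: "cut_loop W p q = take (Suc p) W @ tl (drop q W)"
  by (simp add: cut_loop_def drop_Suc tl_drop)

lemma is_walk_cut_loop: "is_walk n A W \<Longrightarrow> is_walk n A (cut_loop W p q)"
  unfolding cut_loop_eq using pq closed
  by (intro is_walk_append is_walk_take is_walk_drop)
     (auto simp: take_Suc_conv_app_nth hd_drop_conv_nth)

lemma last_cut_loop: "last (cut_loop W p q) = last W"
proof -
  have "last (take (Suc p) W) = hd (drop q W)" "drop q W \<noteq> []"
    using pq closed by (simp_all add: take_Suc_conv_app_nth hd_drop_conv_nth)
  then show ?thesis
    using pq by (simp add: cut_loop_eq last_append_tl)
qed

lemma wweight_cut_loop: "wweight A W = wweight A (cut_loop W p q) + wweight A (subwalk W p q)"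
proof -
  have ends: "last (take (Suc p) W) = W ! p" "last (take (Suc q) W) = W ! q" "hd (drop q W) = W ! q"
    using pq by (simp_all add: take_Suc_conv_app_nth hd_drop_conv_nth)
  have nonempty: "take (Suc p) W \<noteq> []" "drop q W \<noteq> []" "subwalk W p q \<noteq> []"
    using pq length_subwalk by auto
  have "W = take (Suc q) W @ tl (drop q W)"
    by (simp add: tl_drop drop_Suc[symmetric])
  then have "wweight A W = wweight A (take (Suc q) W) + wweight A (drop q W)"
    using wweight_append[of "take (Suc q) W" "drop q W" A] ends nonempty pq by simp
  also have "wweight A (take (Suc q) W) = wweight A (take (Suc p) W) + wweight A (subwalk W p q)"
    using wweight_append[of "take (Suc p) W" "subwalk W p q" A] ends nonempty
    by (simp add: take_append_subwalk hd_subwalk)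
  finally have "wweight A W =
      wweight A (take (Suc p) W) + wweight A (subwalk W p q) + wweight A (drop q W)" .
  moreover have "wweight A (cut_loop W p q) = wweight A (take (Suc p) W) + wweight A (drop q W)"
    using wweight_append[of "take (Suc p) W" "drop q W" A] ends nonempty closed
    by (simp add: cut_loop_eq)
  ultimately show ?thesis
    by (simp add: ac_simps)
qed

end

end

lemma cycle_wweight_nonpos:
  assumes "is_cycle n A Z" "mcm n A \<le> 0"
  shows "wweight A Z \<le> 0"
proof -
  have "wweight A Z / ereal (real (wlen Z)) \<le> mcm n A"
    unfolding mcm_def by (rule SUP_upper) (use assms in auto)
  then have "wweight A Z / ereal (real (wlen Z)) \<le> 0"
    using assms(2) by order
  moreover have "0 < wlen Z"
    using assms(1) unfolding is_cycle_def wlen_def by auto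
  ultimately show ?thesis
    using ereal_divide_le_pos[of "ereal (real (wlen Z))" "wweight A Z" 0] by simp
qed

lemma closed_walk_wweight_nonpos:
  assumes "is_walk n A C" "hd C = last C" "mcm n A \<le> 0"
  shows "wweight A C \<le> 0"
  using assms(1,2)
proof (induction "length C" arbitrary: C rule: less_induct)
  case less
  show ?case
  proof (cases "distinct (tl C)")
    case True
    show ?thesis
    proof (cases "2 \<le> length C")
      case True
      with less.prems \<open>distinct (tl C)\<close> have "is_cycle n A C"
        unfolding is_cycle_def by simp
      then show ?thesis
        using cycle_wweight_nonpos assms(3) by blast
    next
      case False
      then show ?thesis
        by (simp add: wweight_def wlen_def)
    qed
  next
    case False
    then obtain a b where ab: "a < b" "b < length (tl C)" "tl C ! a = tl C ! b"
      by (metis distinct_conv_nth linorder_neqE_nat)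
    then have pq: "Suc a \<le> Suc b" "Suc b < length C" "C ! Suc a = C ! Suc b"
      by (auto simp: nth_tl)
    have "wweight A (cut_loop C (Suc a) (Suc b)) \<le> 0"
      using length_cut_loop[OF pq(1,2)] ab less.prems
      by (intro less.hyps) (simp_all add: is_walk_cut_loop hd_cut_loop last_cut_loop pq)
    moreover have "wweight A (subwalk C (Suc a) (Suc b)) \<le> 0"
      using length_subwalk[OF pq(1,2)] ab less.prems
      by (intro less.hyps) (simp_all add: is_walk_subwalk hd_subwalk last_subwalk pq)
    ultimately show ?thesis
      using wweight_cut_loop[OF pq, of A] by (simp add: add_nonpos_nonpos)
  qed
qed

text \<open>A pair (p, q) stands for the closed subwalk of W from position p to position q;
  cutting it out deletes the positions p+1, ..., q.\<close>

definition disjoint_loops :: "nat list \<Rightarrow> (nat \<times> nat) list \<Rightarrow> bool" where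
  "disjoint_loops W ls \<longleftrightarrow> (\<forall>(p, q)\<in>set ls. p \<le> q \<and> q < length W \<and> W ! p = W ! q) \<and>
     sorted_wrt (\<lambda>l l'. snd l \<le> fst l') ls"

definition loops_length :: "(nat \<times> nat) list \<Rightarrow> nat" where
  "loops_length ls = (\<Sum>(p, q)\<leftarrow>ls. q - p)"

definition avoids_loops :: "(nat \<times> nat) list \<Rightarrow> nat \<Rightarrow> bool" where
  "avoids_loops ls k \<longleftrightarrow> (\<forall>(p, q)\<in>set ls. \<not> (p < k \<and> k \<le> q))"

lemma cut_disjoint_loops:
  assumes "is_walk n A W" "mcm n A \<le> 0" "disjoint_loops W ls"
  shows "\<exists>V. is_walk n A V \<and> hd V = hd W \<and> last V = last W \<and>
     length V + loops_length ls = length W \<and> wweight A W \<le> wweight A V \<and>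
     (\<forall>k < length W. avoids_loops ls k \<longrightarrow> W ! k \<in> set V)"
  using assms(1,3)
proof (induction ls arbitrary: W rule: rev_induct)
  case Nil
  then show ?case
    unfolding loops_length_def avoids_loops_def by auto
next
  case (snoc l ls)
  obtain p q where l: "l = (p, q)"
    by fastforce
  have pq: "p \<le> q" "q < length W" "W ! p = W ! q"
    using snoc.prems(2) l unfolding disjoint_loops_def by auto
  have before: "\<forall>(p', q')\<in>set ls. q' \<le> p"
    using snoc.prems(2) l unfolding disjoint_loops_def by (auto simp: sorted_wrt_append)
  define W' where "W' = cut_loop W p q"
  have len': "length W' + (q - p) = length W"
    using length_cut_loop[OF pq(1,2)] W'_def by simp
  have "disjoint_loops W' ls"
  proof -
    have "p' \<le> q' \<and> q' < length W' \<and> W' ! p' = W' ! q'" if "(p', q') \<in> set ls" for p' q'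
    proof -
      have "p' \<le> q'" "q' \<le> p" "W ! p' = W ! q'"
        using that before snoc.prems(2) unfolding disjoint_loops_def by auto
      then show ?thesis
        using len' pq nth_cut_loop_low[OF pq(1,2)] W'_def by auto
    qed
    then show ?thesis
      using snoc.prems(2) unfolding disjoint_loops_def by (auto simp: sorted_wrt_append)
  qed
  then obtain V where V: "is_walk n A V" "hd V = hd W'" "last V = last W'"
     "length V + loops_length ls = length W'" "wweight A W' \<le> wweight A V"
     "\<forall>k < length W'. avoids_loops ls k \<longrightarrow> W' ! k \<in> set V"
    using snoc.IH[of W'] is_walk_cut_loop[OF pq snoc.prems(1)] W'_def by blast
  have "wweight A (subwalk W p q) \<le> 0"
    using pq snoc.prems(1) assms(2)
    by (intro closed_walk_wweight_nonpos) (simp_all add: is_walk_subwalk hd_subwalk last_subwalk)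
  then have "wweight A W \<le> wweight A W'"
    using wweight_cut_loop[OF pq, of A] W'_def by (metis add_left_mono add.right_neutral)
  moreover have "W ! k \<in> set V" if k: "k < length W" "avoids_loops (ls @ [l]) k" for k
  proof (cases "k \<le> p")
    case True
    moreover have "avoids_loops ls k"
      using k(2) unfolding avoids_loops_def by simp
    moreover have "k < length W'"
      using True len' pq by linarith
    ultimately show ?thesis
      using V(6) nth_cut_loop_low[OF pq(1,2) True] W'_def by metis
  next
    case False
    then have "q < k"
      using k l unfolding avoids_loops_def by auto
    moreover have "avoids_loops ls (k - (q - p))"
      using before \<open>q < k\<close> pq unfolding avoids_loops_def by fastforce
    moreover have "p < k - (q - p)" "k - (q - p) < length W'"
      using \<open>q < k\<close> k(1) len' pq by linarith+
    ultimately show ?thesis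
      using V(6) nth_cut_loop_high[OF pq(1,2), of "k - (q - p)"] \<open>q < k\<close> pq W'_def by auto
  qed
  ultimately show ?case
    using V len' l hd_cut_loop[OF pq(1,2)] last_cut_loop[OF pq] W'_def
    by (intro exI[of _ V]) (auto simp: loops_length_def)
qed

definition loop_reduced :: "nat \<Rightarrow> nat set \<Rightarrow> nat list \<Rightarrow> bool" where
  "loop_reduced g Z W \<longleftrightarrow> (\<forall>ls k. disjoint_loops W ls \<and> g dvd loops_length ls \<and>
     0 < loops_length ls \<and> k < length W \<and> W ! k \<in> Z \<longrightarrow> \<not> avoids_loops ls k)"

lemma twice_optimal_loop_reduced:
  assumes opt: "twice_optimal n A g Z0 W" and "mcm n A \<le> 0"
  shows "loop_reduced g (set Z0) W"
  unfolding loop_reduced_def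
proof (intro allI impI notI)
  fix ls k
  assume ls: "disjoint_loops W ls \<and> g dvd loops_length ls \<and> 0 < loops_length ls \<and>
      k < length W \<and> W ! k \<in> set Z0" and k: "avoids_loops ls k"
  have "is_walk n A W"
    using opt by (simp add: twice_optimal_def)
  then obtain V where V: "is_walk n A V" "hd V = hd W" "last V = last W"
     "length V + loops_length ls = length W" "wweight A W \<le> wweight A V"
     "\<forall>k < length W. avoids_loops ls k \<longrightarrow> W ! k \<in> set V"
    using cut_disjoint_loops[OF _ assms(2)] ls by blast
  have len: "wlen W = wlen V + loops_length ls"
    using V(1,4) unfolding wlen_def by (cases V) auto
  then have "wlen V mod g = wlen W mod g"
    using ls by auto
  moreover have "through Z0 V"
    using V(6) ls k unfolding through_def by blast
  ultimately have "wweight A V \<le> wweight A W \<and> (wweight A V = wweight A W \<longrightarrow> wlen W \<le> wlen V)"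
    using opt[unfolded twice_optimal_def, THEN conjunct2, THEN conjunct2, rule_format, of V] V(1-3)
    by blast
  with V(5) have "wlen W \<le> wlen V"
    by (meson antisym)
  then show False
    using len ls by simp
qed

lemma loop_reducedD1:
  assumes "loop_reduced g Z W" "a < b" "b < length W" "W ! a = W ! b" "a mod g = b mod g"
    "k < length W" "W ! k \<in> Z"
  shows "a < k \<and> k \<le> b"
proof -
  have "disjoint_loops W [(a, b)]" "g dvd loops_length [(a, b)]" "0 < loops_length [(a, b)]"
    using assms(2-5) mod_eq_dvd_iff_nat[of a b g]
    by (simp_all add: disjoint_loops_def loops_length_def)
  then have "\<not> avoids_loops [(a, b)] k"
    using assms(1,6,7) unfolding loop_reduced_def by blast
  then show ?thesis
    unfolding avoids_loops_def by auto
qed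

lemma loop_reducedD3:
  assumes "loop_reduced g Z W"
    and "a1 \<le> b1" "b1 \<le> a2" "a2 \<le> b2" "b2 \<le> a3" "a3 \<le> b3" "b3 < length W"
    and "W ! a1 = W ! b1" "W ! a2 = W ! b2" "W ! a3 = W ! b3"
    and "g dvd (b1 - a1) + (b2 - a2) + (b3 - a3)" "0 < (b1 - a1) + (b2 - a2) + (b3 - a3)"
    and "k < length W" "W ! k \<in> Z"
  shows "(a1 < k \<and> k \<le> b1) \<or> (a2 < k \<and> k \<le> b2) \<or> (a3 < k \<and> k \<le> b3)"
proof -
  let ?ls = "[(a1, b1), (a2, b2), (a3, b3)]"
  have "disjoint_loops W ?ls" "g dvd loops_length ?ls" "0 < loops_length ?ls"
    using assms(2-12) by (simp_all add: disjoint_loops_def loops_length_def add.assoc)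
  then have "\<not> avoids_loops ?ls k"
    using assms(1,13,14) unfolding loop_reduced_def by blast
  then show ?thesis
    unfolding avoids_loops_def by auto
qed

definition positions :: "nat list \<Rightarrow> nat \<Rightarrow> nat set" where
  "positions W x = {k. k < length W \<and> W ! k = x}"

lemma finite_positions [simp]: "finite (positions W x)"
  unfolding positions_def by simp

lemma length_eq_sum_card_positions:
  assumes "\<forall>x\<in>set W. x < n"
  shows "length W = (\<Sum>x<n. card (positions W x))"
proof -
  have "{..<length W} = (\<Union>x<n. positions W x)"
    using assms unfolding positions_def by (auto dest: nth_mem)
  moreover have "card (\<Union>x<n. positions W x) = (\<Sum>x<n. card (positions W x))"
    by (rule card_UN_disjoint) (auto simp: positions_def)
  ultimately show ?thesis
    by (metis card_lessThan)
qed

lemma card_le_of_distinct_residues: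
  fixes f :: "nat \<Rightarrow> nat"
  assumes "0 < g" and "\<And>a b. a \<in> S \<Longrightarrow> b \<in> S \<Longrightarrow> a < b \<Longrightarrow> f a mod g \<noteq> f b mod g"
  shows "card S \<le> g"
proof -
  have "inj_on (\<lambda>k. f k mod g) S"
  proof (rule inj_onI)
    fix a b assume "a \<in> S" "b \<in> S" "f a mod g = f b mod g"
    then show "a = b"
      using assms(2)[of a b] assms(2)[of b a] by (cases a b rule: linorder_cases) auto
  qed
  moreover have "(\<lambda>k. f k mod g) ` S \<subseteq> {..<g}"
    using assms(1) by auto
  ultimately show ?thesis
    using card_inj_on_le[of _ S "{..<g}"] by simp
qed

lemma card_visits_le_girth:
  assumes "loop_reduced g Z W" "0 < g" "S \<subseteq> positions W x"
    and "\<And>a b. a \<in> S \<Longrightarrow> b \<in> S \<Longrightarrow> a < b \<Longrightarrow> \<exists>k<length W. W ! k \<in> Z \<and> \<not> (a < k \<and> k \<le> b)"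
  shows "card S \<le> g"
proof (rule card_le_of_distinct_residues[where f = id])
  fix a b assume "a \<in> S" "b \<in> S" "a < b"
  then show "id a mod g \<noteq> id b mod g"
    using assms(3) assms(4)[of a b] loop_reducedD1[OF assms(1) \<open>a < b\<close>]
    unfolding positions_def by auto
qed (use assms(2) in simp)

lemma card_positions_le_one_side:
  assumes lr: "loop_reduced g Z W" and g: "0 < g" and r: "r < length W" "W ! r \<in> Z"
    and side: "(\<forall>k\<in>positions W x. r \<le> k) \<or> (\<forall>k\<in>positions W x. k < r)"
  shows "card (positions W x) \<le> g"
proof (rule card_visits_le_girth[OF lr g subset_refl])
  fix a b assume "a \<in> positions W x" "b \<in> positions W x"
  then have "\<not> (a < r \<and> r \<le> b)"
    using side by auto
  then show "\<exists>k<length W. W ! k \<in> Z \<and> \<not> (a < k \<and> k \<le> b)"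
    using r by blast
qed

lemma card_positions_le_straddling_loop:
  assumes lr: "loop_reduced g Z W" and g: "0 < g"
    and r: "r \<le> r'" "r' < length W" "W ! r \<in> Z" "W ! r = W ! r'"
    and b: "b < r" "W ! b = x" and a: "r' < a" "a < length W" "W ! a = x"
    and gap: "\<forall>k. b < k \<and> k < a \<longrightarrow> W ! k \<noteq> x"
  shows "card (positions W x - (if r = r' then {a} else {})) \<le> g"
proof -
  define S where "S = positions W x - (if r = r' then {a} else {})"
  txt \<open>psi closes the gap from b to a but keeps the loop from r to r', so the residues of two
    visits k1 < r < k2 differ by the length of the three loops (k1, b), (r, r') and (a, k2).\<close>
  define psi where "psi k = (if k < r then k else k + (r' - r) - (a - b))" for k
  have S: "k < length W" "W ! k = x" "k \<le> b \<or> a \<le> k" if "k \<in> S" for k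
    using that gap unfolding S_def positions_def by (auto simp: not_le[symmetric])
  have r_len: "r < length W"
    using r by simp
  show ?thesis
    unfolding S_def[symmetric]
  proof (rule card_le_of_distinct_residues[OF g, where f = psi])
    fix k1 k2 assume k: "k1 \<in> S" "k2 \<in> S" "k1 < k2"
    have W_k: "W ! k1 = W ! k2" "k2 < length W"
      using S k by auto
    show "psi k1 mod g \<noteq> psi k2 mod g"
    proof
      assume eq: "psi k1 mod g = psi k2 mod g"
      consider "k2 \<le> b" | "a \<le> k1" | "k1 \<le> b" "a \<le> k2"
        using S(3)[OF k(1)] S(3)[OF k(2)] k(3) b(1) a(1) r(1) by linarith
      then show False
      proof cases
        case 1
        then have "k1 mod g = k2 mod g"
          using eq k(3) b(1) by (simp add: psi_def)
        then show False
          using loop_reducedD1[OF lr k(3) W_k(2) W_k(1) _ r_len r(3)] 1 b(1) by simp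
      next
        case 2
        then have "psi k1 \<le> psi k2" "psi k2 - psi k1 = k2 - k1"
          using a(1) b(1) r(1) k(3) by (auto simp: psi_def)
        then have "k1 mod g = k2 mod g"
          using eq k(3) mod_eq_dvd_iff_nat[of "psi k1" "psi k2" g]
            mod_eq_dvd_iff_nat[of k1 k2 g] by simp
        then show False
          using loop_reducedD1[OF lr k(3) W_k(2) W_k(1) _ r_len r(3)] 2 a(1) r(1) by simp
      next
        case 3
        then have "psi k2 - psi k1 = (b - k1) + (r' - r) + (k2 - a)" "psi k1 \<le> psi k2"
          using b(1) a(1) r(1) by (auto simp: psi_def)
        then have dvd: "g dvd (b - k1) + (r' - r) + (k2 - a)"
          using eq mod_eq_dvd_iff_nat[of "psi k1" "psi k2" g] by simp
        have pos: "0 < (b - k1) + (r' - r) + (k2 - a)"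
          using k(2) 3 r(1) unfolding S_def by (auto split: if_splits)
        have ends: "W ! k1 = W ! b" "W ! a = W ! k2"
          using S k a b by auto
        have "(k1 < r \<and> r \<le> b) \<or> (r < r \<and> r \<le> r') \<or> (a < r \<and> r \<le> k2)"
          by (rule loop_reducedD3[OF lr 3(1) less_imp_le[OF b(1)] r(1) less_imp_le[OF a(1)] 3(2)
              W_k(2) ends(1) r(4) ends(2) dvd pos r_len r(3)])
        then show False
          using b(1) a(1) r(1) by simp
      qed
    qed
  qed
qed

lemma card_positions_le_around_loop:
  assumes lr: "loop_reduced g Z W" and g: "0 < g"
    and r: "r \<le> r'" "r' < length W" "W ! r \<in> Z" "W ! r = W ! r'"
    and x: "\<forall>k. r \<le> k \<and> k \<le> r' \<longrightarrow> W ! k \<noteq> x"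
  shows "card (positions W x) \<le> (if r = r' then Suc g else g)"
proof -
  define Bef where "Bef = {k \<in> positions W x. k < r}"
  define Aft where "Aft = {k \<in> positions W x. r' < k}"
  have side: "k < r \<or> r' < k" if "k \<in> positions W x" for k
    using x that not_le unfolding positions_def by blast
  show ?thesis
  proof (cases "Bef = {} \<or> Aft = {}")
    case True
    then have "(\<forall>k\<in>positions W x. r \<le> k) \<or> (\<forall>k\<in>positions W x. k < r)"
      using side r(1) unfolding Bef_def Aft_def by fastforce
    then show ?thesis
      using card_positions_le_one_side[OF lr g _ r(3), of x] r(1,2) by auto
  next
    case False
    define b where "b = Max Bef"
    define a where "a = Min Aft"
    have b: "b \<in> positions W x" "b < r" "\<And>k. k \<in> positions W x \<Longrightarrow> k < r \<Longrightarrow> k \<le> b"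
      using False Max_in[of Bef] unfolding b_def Bef_def by auto
    have a: "a \<in> positions W x" "r' < a" "\<And>k. k \<in> positions W x \<Longrightarrow> r' < k \<Longrightarrow> a \<le> k"
      using False Min_in[of Aft] unfolding a_def Aft_def by auto
    have "\<forall>k. b < k \<and> k < a \<longrightarrow> W ! k \<noteq> x"
    proof (intro allI impI notI)
      fix k assume "b < k \<and> k < a" "W ! k = x"
      moreover have "k < length W"
        using calculation a(1) unfolding positions_def by auto
      ultimately show False
        using side[of k] a(3)[of k] b(3)[of k] unfolding positions_def by fastforce
    qed
    then have "card (positions W x - (if r = r' then {a} else {})) \<le> g"
      using card_positions_le_straddling_loop[OF lr g r, of b x a] a b
      unfolding positions_def by auto
    moreover have "card (positions W x) \<le> card (positions W x - (if r = r' then {a} else {})) +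
        (if r = r' then 1 else 0)"
      using a(1) by (auto simp: card_Diff_singleton)
    ultimately show ?thesis
      by (auto split: if_splits)
  qed
qed

lemma card_positions_le:
  assumes lr: "loop_reduced g Z W" and g: "0 < g" and k0: "k0 < length W" "W ! k0 \<in> Z"
  shows "card (positions W x) \<le> (if x \<in> Z then g else Suc g)"
proof (cases "x \<in> Z")
  case True
  have "card (positions W x) \<le> g"
  proof (rule card_visits_le_girth[OF lr g subset_refl])
    fix a b assume "a \<in> positions W x" "a < b"
    then show "\<exists>k<length W. W ! k \<in> Z \<and> \<not> (a < k \<and> k \<le> b)"
      using True unfolding positions_def by blast
  qed
  then show ?thesis
    using True by simp
next
  case False
  then have "\<forall>k. k0 \<le> k \<and> k \<le> k0 \<longrightarrow> W ! k \<noteq> x"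
    using k0(2) by (metis le_antisym)
  with False show ?thesis
    using card_positions_le_around_loop[OF lr g order_refl k0 refl, of x] by simp
qed

lemma card_positions_eq_if_long:
  assumes lr: "loop_reduced g Z W" and g: "0 < g" and k0: "k0 < length W" "W ! k0 \<in> Z"
    and Z: "Z \<subseteq> {..<n}" "card Z = g" and W: "\<forall>x\<in>set W. x < n"
    and long: "g * g + (n - g) * Suc g \<le> length W" and x: "x < n"
  shows "card (positions W x) = (if x \<in> Z then g else Suc g)"
proof -
  define bound where "bound x = (if x \<in> Z then g else Suc g)" for x
  have "(\<Sum>x<n. bound x) = (\<Sum>x\<in>Z. g) + (\<Sum>x\<in>{..<n} - Z. Suc g)"
    using Z(1) finite_subset[OF Z(1)] unfolding bound_def
    by (simp add: sum.subset_diff[of Z "{..<n}"] Int_absorb1 Diff_eq[symmetric])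
  also have "\<dots> = g * g + (n - g) * Suc g"
    using Z finite_subset[OF Z(1)] by (simp add: card_Diff_subset)
  also have "\<dots> \<le> (\<Sum>x<n. card (positions W x))"
    using long length_eq_sum_card_positions[OF W] by simp
  finally have "(\<Sum>x<n. card (positions W x)) = (\<Sum>x<n. bound x)"
    using sum_mono[of "{..<n}" "\<lambda>x. card (positions W x)" bound]
      card_positions_le[OF lr g k0] unfolding bound_def by fastforce
  then show ?thesis
    using sum_mono_inv[of "\<lambda>x. card (positions W x)" "{..<n}" bound x]
      card_positions_le[OF lr g k0] x unfolding bound_def by simp
qed

lemma visits_enclosed:
  assumes lr: "loop_reduced g Z W" and g: "0 < g" and j: "j \<notin> Z"
    and cj: "card (positions W j) = Suc g" and r: "r < length W" "W ! r \<in> Z"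
  shows "(\<exists>p<r. W ! p = j) \<and> (\<exists>q. r < q \<and> q < length W \<and> W ! q = j)"
proof (intro conjI; rule ccontr)
  assume "\<not> (\<exists>p<r. W ! p = j)"
  then have "\<forall>k\<in>positions W j. r \<le> k"
    unfolding positions_def using not_le by blast
  then show False
    using card_positions_le_one_side[OF lr g r, of j] cj by simp
next
  assume none: "\<not> (\<exists>q. r < q \<and> q < length W \<and> W ! q = j)"
  have "k < r" if "k \<in> positions W j" for k
  proof -
    have "\<not> r < k" "k \<noteq> r"
      using that none j r unfolding positions_def by auto
    then show ?thesis
      by simp
  qed
  then show False
    using card_positions_le_one_side[OF lr g r, of j] cj by auto
qed

lemma visit_between_returns:
  assumes lr: "loop_reduced g Z W" and g: "0 < g" and j: "j \<notin> Z"
    and cj: "card (positions W j) = Suc g"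
    and r: "r < r'" "r' < length W" "W ! r \<in> Z" "W ! r = W ! r'"
  shows "\<exists>k. r < k \<and> k < r' \<and> W ! k = j"
proof (rule ccontr)
  assume "\<not> (\<exists>k. r < k \<and> k < r' \<and> W ! k = j)"
  then have "\<forall>k. r \<le> k \<and> k \<le> r' \<longrightarrow> W ! k \<noteq> j"
    using j r by (metis le_neq_implies_less)
  then have "card (positions W j) \<le> g"
    using card_positions_le_around_loop[OF lr g less_imp_le[OF r(1)] r(2-4)] r(1) by simp
  then show False
    using cj by simp
qed

lemma visit_after_non_last_visit:
  assumes lr: "loop_reduced g Z W" and g: "0 < g" and i: "i \<in> Z" and j: "j \<notin> Z"
    and cj: "card (positions W j) = Suc g" and ci: "card (positions W i) = g"
    and p: "p \<in> positions W j" "p \<noteq> Max (positions W j)"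
  shows "\<exists>r. p < r \<and> r < length W \<and> W ! r = i \<and> (\<forall>k. p < k \<and> k < r \<longrightarrow> W ! k \<noteq> j)"
proof -
  define P where "P = positions W j"
  define Q where "Q = positions W i"
  define last_j where "last_j r = Max {p \<in> P. p < r}" for r
  have last_j: "last_j r \<in> P" "last_j r < r" "\<And>p. p \<in> P \<Longrightarrow> p < r \<Longrightarrow> p \<le> last_j r"
    if "r \<in> Q" for r
  proof -
    have "{p \<in> P. p < r} \<noteq> {}"
      using visits_enclosed[OF lr g j cj, of r] that i unfolding P_def Q_def positions_def by auto
    then show "last_j r \<in> P" "last_j r < r" "\<And>p. p \<in> P \<Longrightarrow> p < r \<Longrightarrow> p \<le> last_j r"
      using Max_in[of "{p \<in> P. p < r}"] unfolding last_j_def P_def by auto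
  qed
  txt \<open>last_j maps the g visits of i injectively into the g visits of j other than the last
    one, hence onto them.\<close>
  have "inj_on last_j Q"
  proof (rule inj_onI, rule ccontr)
    fix r1 r2 assume r: "r1 \<in> Q" "r2 \<in> Q" "last_j r1 = last_j r2" "r1 \<noteq> r2"
    have no_j: False if rr: "r1 \<in> Q" "r2 \<in> Q" "r1 < r2" "last_j r1 = last_j r2" for r1 r2
    proof -
      obtain k where k: "r1 < k" "k < r2" "W ! k = j"
        using visit_between_returns[OF lr g j cj \<open>r1 < r2\<close>] rr i
        unfolding Q_def positions_def by auto
      then have "k \<in> P"
        using rr(2) unfolding P_def Q_def positions_def by auto
      then show False
        using k last_j[OF rr(1)] last_j(3)[OF rr(2)] rr(4) by fastforce
    qed
    show False
      using r no_j[of r1 r2] no_j[of r2 r1] by (metis linorder_neqE_nat)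
  qed
  moreover have "last_j ` Q \<subseteq> P - {Max P}"
  proof
    fix p' assume "p' \<in> last_j ` Q"
    then obtain r where r: "r \<in> Q" "p' = last_j r"
      by blast
    obtain q' where "r < q'" "q' \<in> P"
      using visits_enclosed[OF lr g j cj, of r] r(1) i unfolding P_def Q_def positions_def by auto
    moreover have "q' \<le> Max P"
      using \<open>q' \<in> P\<close> unfolding P_def by simp
    ultimately show "p' \<in> P - {Max P}"
      using last_j[OF r(1)] r(2) by auto
  qed
  moreover have "card (P - {Max P}) = card Q"
  proof -
    have "P \<noteq> {}"
      using cj unfolding P_def by auto
    then have "Max P \<in> P"
      unfolding P_def by simp
    then show ?thesis
      using cj ci unfolding P_def Q_def by (simp add: card_Diff_singleton)
  qed
  ultimately have "last_j ` Q = P - {Max P}"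
    by (metis card_image card_subset_eq finite_Diff finite_positions P_def)
  then obtain r where r: "r \<in> Q" "p = last_j r"
    using p unfolding P_def by blast
  have "r < length W"
    using r(1) unfolding Q_def positions_def by simp
  then have "\<forall>k. p < k \<and> k < r \<longrightarrow> W ! k \<noteq> j"
    using last_j(3)[OF r(1)] r(2) unfolding P_def positions_def by (auto simp: not_le[symmetric])
  then show ?thesis
    using last_j[OF r(1)] r unfolding Q_def positions_def by auto
qed

lemma unique_visit_between_consecutive:
  assumes lr: "loop_reduced g Z W" and g: "0 < g" and i: "i \<in> Z" and j: "j \<notin> Z"
    and cj: "card (positions W j) = Suc g" and ci: "card (positions W i) = g"
    and pq: "p < q" "q < length W" "W ! p = j" "W ! q = j"
    and consecutive: "\<forall>r. p < r \<and> r < q \<longrightarrow> W ! r \<noteq> j"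
  shows "\<exists>!r. p < r \<and> r < q \<and> W ! r = i"
proof -
  have "q \<in> positions W j" "p \<in> positions W j"
    using pq unfolding positions_def by auto
  moreover have "q \<le> Max (positions W j)"
    using \<open>q \<in> positions W j\<close> by simp
  ultimately have "p \<noteq> Max (positions W j)"
    using pq(1) by linarith
  then obtain r where r: "p < r" "r < length W" "W ! r = i"
    and no_j: "\<forall>k. p < k \<and> k < r \<longrightarrow> W ! k \<noteq> j"
    using visit_after_non_last_visit[OF lr g i j cj ci \<open>p \<in> positions W j\<close>] by blast
  have "r < q"
    using no_j[rule_format, of q] pq r i j by (metis linorder_neqE_nat)
  moreover have "r' = r" if r': "p < r'" "r' < q" "W ! r' = i" for r'
  proof (rule ccontr)
    assume "r' \<noteq> r"
    then obtain r1 r2 where "r1 < r2" "p < r1" "r2 < q" "W ! r1 = i" "W ! r2 = i"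
      using r r' \<open>r < q\<close> by (metis linorder_neqE_nat)
    then obtain k where "r1 < k" "k < r2" "W ! k = j"
      using visit_between_returns[OF lr g j cj, of r1 r2] i pq(2) by auto
    then show False
      using consecutive \<open>p < r1\<close> \<open>r2 < q\<close> by auto
  qed
  ultimately show ?thesis
    using r by blast
qed

lemma card_set_cycle:
  assumes "is_cycle n A Z"
  shows "card (set Z) = wlen Z"
proof -
  have Z: "2 \<le> length Z" "hd Z = last Z" "distinct (tl Z)"
    using assms unfolding is_cycle_def by auto
  then obtain z Z' where Z': "Z = z # Z'" "Z' \<noteq> []"
    by (cases Z) (auto simp: Suc_le_length_iff)
  with Z have "set Z = set Z'"
    by auto
  then show ?thesis
    using Z Z' by (simp add: distinct_card wlen_def)
qed

lemma DM_add_girth: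
  assumes "0 < g" "g < n"
  shows "DM g n + g = g * g + (n - g) * Suc g"
proof -
  obtain g' where "g = Suc g'"
    using assms(1) gr0_implies_Suc by blast
  moreover obtain m where "n = Suc (g + m)"
    using assms(2) less_imp_Suc_add by blast
  ultimately show ?thesis
    unfolding DM_def by (simp add: algebra_simps)
qed

theorem corollaryc:
  fixes n :: nat and A :: mpmat and Z0 W :: "nat list" and i j :: nat
  assumes finite_entries: "\<forall>a b. A a b \<noteq> \<infinity>"
    and lambda0: "mcm n A = 0"
    and T1_DM: "T1 n A = DM (crit_girth n A) n"
    and Z0_cycle: "crit_cycle n A Z0" and Z0_len: "wlen Z0 = crit_girth n A"
    and Z0_unique: "\<forall>Z. crit_cycle n A Z \<and> wlen Z = crit_girth n A \<longrightarrow>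
                       (\<exists>k. tl Z = rotate k (tl Z0))"
    and i_in: "i \<in> set Z0" and j_node: "j < n" and j_notin: "j \<notin> set Z0"
    and W_int: "interesting n A (crit_girth n A) Z0 W"
  shows "(\<forall>p q. p < q \<and> q < length W \<and> W ! p = j \<and> W ! q = j \<and>
              (\<forall>r. p < r \<and> r < q \<longrightarrow> W ! r \<noteq> j) \<longrightarrow>
              (\<exists>!r. p < r \<and> r < q \<and> W ! r = i))
       \<and> (j \<in> set W \<longrightarrow>
            (\<forall>r < length W. W ! r = i \<longrightarrow>
               (\<exists>p < r. W ! p = j) \<and> (\<exists>q. r < q \<and> q < length W \<and> W ! q = j)))"
proof -
  define g where "g = crit_girth n A"
  have cycle: "is_cycle n A Z0"
    using Z0_cycle by (simp add: crit_cycle_def)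
  have Z0: "set Z0 \<subseteq> {..<n}" "card (set Z0) = g" "0 < g"
    using cycle card_set_cycle[OF cycle] Z0_len
    unfolding g_def is_cycle_def is_walk_def wlen_def by auto
  have "card (insert j (set Z0)) \<le> n"
    using Z0(1) j_node by (metis card_lessThan card_mono finite_lessThan insert_subset lessThan_iff)
  then have "g < n"
    using Z0(1,2) j_notin finite_subset by fastforce
  have opt: "twice_optimal n A g Z0 W" and len: "wlen W = DM g n + g - 1"
    using W_int unfolding interesting_def g_def by auto
  have walk: "is_walk n A W"
    using opt by (simp add: twice_optimal_def)
  then have "length W = DM g n + g"
    using len Z0(3) unfolding wlen_def by (cases W) auto
  then have long: "g * g + (n - g) * Suc g \<le> length W"
    using DM_add_girth[OF Z0(3) \<open>g < n\<close>] by simp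
  have reduced: "loop_reduced g (set Z0) W"
    using twice_optimal_loop_reduced[OF opt] lambda0 by simp
  obtain k0 where k0: "k0 < length W" "W ! k0 \<in> set Z0"
    using opt unfolding twice_optimal_def through_def by (metis disjoint_iff in_set_conv_nth)
  have counts: "card (positions W x) = (if x \<in> set Z0 then g else Suc g)" if "x < n" for x
    using card_positions_eq_if_long[OF reduced Z0(3) k0 Z0(1,2) _ long that] walk
    unfolding is_walk_def by blast
  have cj: "card (positions W j) = Suc g" and ci: "card (positions W i) = g"
    using counts[OF j_node] counts[of i] j_notin i_in Z0(1) by auto
  show ?thesis
    using unique_visit_between_consecutive[OF reduced Z0(3) i_in j_notin cj ci]
      visits_enclosed[OF reduced Z0(3) j_notin cj] i_in by blast
qed

end
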